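(* Let $(s_1,\dots,s_n)\in\{\pm1\}^n$ and let $T(\delta)$, $\delta>0$, be $\mathbb R^n$-valued Gaussian random vectors such that: (i) $T(\delta)$ has mean $0$ and positive-definite covariance matrix $C(\delta)$ with eigenvalues $\lambda_1(\delta),\dots,\lambda_n(\delta)>0$ and orthonormal eigenvectors $v_1(\delta),\dots,v_n(\delta)$; (ii) there is $\bar v_1\in\mathbb R^n$ with $v_1(\delta)\to\bar v_1$ as $\delta\to0$ and $s_j\bar v_{1j}>0$ for all $j$. Let $P(\delta)=\mathbb P\{s_jT_j(\delta)\ge0\text{ for all }j\}$. Then $$\limsup_{\delta\to0}P(\delta)\sqrt{\frac{\det C(\delta)}{\lambda_1(\delta)^n}}\le\frac{\Gamma(n/2)}{2\pi^{n/2}(n-1)!}\Big|\prod_{j=1}^n\bar v_{1j}\Big|^{-1}.$$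
   Context: No assumption is made that $\lambda_1(\delta)$ is the smallest eigenvalue; $\lambda_1(\delta)$ is any eigenvalue of $C(\delta)$ whose unit eigenvector $v_1(\delta)$ satisfies (ii). *)

theory Defs
  imports "HOL-Probability.Probability"
begin

definition gauss_density :: "real^'n^'n \<Rightarrow> real^'n \<Rightarrow> real" where
  "gauss_density C x =
     exp (- (x \<bullet> (matrix_inv C *v x)) / 2) / sqrt ((2 * pi) ^ CARD('n) * det C)"

definition pos_def_matrix :: "real^'n^'n \<Rightarrow> bool" where
  "pos_def_matrix C \<longleftrightarrow> transpose C = C \<and> (\<forall>x. x \<noteq> 0 \<longrightarrow> x \<bullet> (C *v x) > 0)"

end

theory Submission
  imports Defs
begin

(* Fix delta > 0 and write C, lam, v for C(delta), lam1(delta), v1(delta).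
   Since v is a unit eigenvector of C, the Cauchy-Schwarz inequality for the inner
   product given by C^-1 yields (v . x)^2 <= lam * x . C^-1 x, so the Gaussian density is
   dominated by the "ridge" function exp (-(v . x)^2 / (2 lam)) / sqrt ((2 pi)^n det C).
   On the orthant {s_j x_j >= 0} the diagonal substitution x_j = sqrt lam * y_j / v_j
   turns the ridge integral into sqrt lam ^ n / |prod v_j| times the universal constant
     J n = integral over the positive orthant of exp (-(y_1 + ... + y_n)^2 / 2),
   and a layer-cake argument with the volume t^n / n! of the standard simplex gives
   J n = 2^(n/2) Gamma (n/2 + 1) / n!.  Hence, for every delta small enough that v1(delta)
   has the sign pattern s, P(delta) sqrt (det C / lam^n) <= K / |prod v1(delta)_j| with K the
   constant of the theorem; letting delta -> 0 and using v1(delta) -> vbar gives the claim. *)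

section \<open>The orthant integral of a Gaussian ridge in the direction (1,...,1)\<close>

lemma nn_integral_exp_minus_tail:
  fixes c :: real
  shows "(\<integral>\<^sup>+u. ennreal (indicator {c..} u * exp (- u)) \<partial>lborel) = ennreal (exp (- c))"
  using nn_integral_has_integral_lebesgue[OF _ has_integral_exp_minus_to_infinity[of 1 c]]
  by simp

definition orthant_simplex :: "real \<Rightarrow> 'a::euclidean_space set" where
  "orthant_simplex t = {x. (\<forall>i\<in>Basis. 0 \<le> x \<bullet> i) \<and> (\<Sum>i\<in>Basis. x \<bullet> i) \<le> t}"

lemma emeasure_orthant_simplex:
  assumes "t \<ge> 0"
  shows "emeasure lborel (orthant_simplex t :: 'a::euclidean_space set) = ennreal (t ^ DIM('a) / fact DIM('a))"
proof -
  have "emeasure lborel (orthant_simplex t :: 'a set) =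
        emeasure (distr (Pi\<^sub>M Basis (\<lambda>b. lborel)) borel (\<lambda>f. \<Sum>b\<in>Basis. f b *\<^sub>R b))
          (orthant_simplex t :: 'a set)"
    by (subst lborel_eq) simp
  also have "\<dots> = emeasure (Pi\<^sub>M Basis (\<lambda>b. lborel))
                    ({y. (\<forall>i\<in>Basis. 0 \<le> y i) \<and> sum y (Basis :: 'a set) \<le> t} \<inter> space (Pi\<^sub>M Basis (\<lambda>b. lborel)))"
    unfolding orthant_simplex_def by (subst emeasure_distr) auto
  also have "\<dots> = ennreal (t ^ DIM('a) / fact DIM('a))"
    by (subst emeasure_std_simplex_aux) (use assms in auto)
  finally show ?thesis .
qed

lemma sqrt_power_eq_powr:
  fixes x :: real
  assumes "x \<ge> 0" and "n \<ge> 1"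
  shows "sqrt x ^ n = x powr (real n / 2)"
proof (cases "x = 0")
  case False
  then have "sqrt x ^ n = (x powr (1 / 2)) powr real n"
    using assms by (simp add: powr_half_sqrt powr_realpow)
  then show ?thesis by (simp add: powr_powr)
qed (use assms in simp)

definition orthant_const :: "nat \<Rightarrow> real" where
  "orthant_const n = 2 powr (real n / 2) * Gamma (real n / 2 + 1) / fact n"

lemma orthant_const_pos: "orthant_const n > 0"
  unfolding orthant_const_def by simp

lemma nn_integral_orthant_level_set:
  fixes u :: real
  defines "n \<equiv> DIM('a::euclidean_space)"
  shows "(\<integral>\<^sup>+y. ennreal (if (\<forall>b\<in>Basis. 0 \<le> y \<bullet> b) \<and> (\<Sum>b\<in>Basis. y \<bullet> b)\<^sup>2 / 2 \<le> u then exp (- u) else 0)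
            \<partial>(lborel :: 'a measure))
       = ennreal (indicator {0..} u * u powr (real n / 2) / exp u) * ennreal (2 powr (real n / 2) / fact n)"
proof (cases "u \<ge> 0")
  case True
  have n1: "n \<ge> 1" unfolding n_def by (simp add: Suc_leI)
  have level_set: "((\<forall>b\<in>Basis. 0 \<le> y \<bullet> b) \<and> (\<Sum>b\<in>Basis. y \<bullet> b)\<^sup>2 / 2 \<le> u) \<longleftrightarrow>
                   y \<in> orthant_simplex (sqrt (2 * u))" for y :: 'a
  proof -
    have "(\<Sum>b\<in>Basis. y \<bullet> b)\<^sup>2 \<le> 2 * u \<longleftrightarrow> (\<Sum>b\<in>Basis. y \<bullet> b) \<le> sqrt (2 * u)"
      if "0 \<le> (\<Sum>b\<in>Basis. y \<bullet> b)"
      using that True by (metis real_le_rsqrt real_sqrt_le_iff real_sqrt_unique)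
    moreover have "(\<forall>b\<in>Basis. 0 \<le> y \<bullet> b) \<Longrightarrow> 0 \<le> (\<Sum>b\<in>Basis. y \<bullet> b)"
      by (rule sum_nonneg) auto
    ultimately show ?thesis unfolding orthant_simplex_def by auto
  qed
  have "(\<integral>\<^sup>+y. ennreal (if (\<forall>b\<in>Basis. 0 \<le> y \<bullet> b) \<and> (\<Sum>b\<in>Basis. y \<bullet> b)\<^sup>2 / 2 \<le> u then exp (- u) else 0)
          \<partial>(lborel :: 'a measure))
        = (\<integral>\<^sup>+y. ennreal (exp (- u)) * indicator (orthant_simplex (sqrt (2 * u)) :: 'a set) y \<partial>lborel)"
    by (intro nn_integral_cong) (simp only: level_set, simp add: indicator_def)
  also have "\<dots> = ennreal (exp (- u)) * ennreal (sqrt (2 * u) ^ n / fact n)"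
    unfolding n_def using True
    by (simp add: nn_integral_cmult_indicator orthant_simplex_def emeasure_orthant_simplex[symmetric])
  also have "sqrt (2 * u) ^ n = 2 powr (real n / 2) * u powr (real n / 2)"
    using True n1 by (simp add: sqrt_power_eq_powr powr_mult)
  finally show ?thesis
    using True by (simp add: ennreal_mult[symmetric] exp_minus field_simps)
next
  case False
  have "\<not> (\<Sum>b\<in>Basis. y \<bullet> b)\<^sup>2 / 2 \<le> u" for y :: 'a
    using False zero_le_power2[of "\<Sum>b\<in>Basis. y \<bullet> b"] by linarith
  then show ?thesis using False by simp
qed

text \<open>The value of \<open>J n\<close>: write \<open>exp (-q)\<close> as \<open>\<integral>\<^sub>q\<^sup>\<infinity> e^-u du\<close>, swap the integrals, and
  recognise the Gamma integral.\<close>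
lemma nn_integral_orthant_exp_sum_square:
  "(\<integral>\<^sup>+y. ennreal (if (\<forall>b\<in>Basis. 0 \<le> y \<bullet> b) then exp (- (\<Sum>b\<in>Basis. y \<bullet> b)\<^sup>2 / 2) else 0)
      \<partial>(lborel :: 'a::euclidean_space measure))
   = ennreal (orthant_const DIM('a))"
proof -
  define n where "n = DIM('a)"
  define F where "F = (\<lambda>(y::'a) (u::real). ennreal
      (if (\<forall>b\<in>Basis. 0 \<le> y \<bullet> b) \<and> (\<Sum>b\<in>Basis. y \<bullet> b)\<^sup>2 / 2 \<le> u then exp (- u) else 0))"
  have F_measurable: "case_prod F \<in> borel_measurable (lborel \<Otimes>\<^sub>M lborel)"
    unfolding F_def by measurable
  have layer_cake: "ennreal (if (\<forall>b\<in>Basis. 0 \<le> y \<bullet> b) then exp (- (\<Sum>b\<in>Basis. y \<bullet> b)\<^sup>2 / 2) else 0)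
      = (\<integral>\<^sup>+u. F y u \<partial>lborel)" for y
  proof (cases "\<forall>b\<in>Basis. 0 \<le> y \<bullet> b")
    case True
    have "(\<integral>\<^sup>+u. F y u \<partial>lborel)
          = (\<integral>\<^sup>+u. ennreal (indicator {(\<Sum>b\<in>Basis. y \<bullet> b)\<^sup>2 / 2..} u * exp (- u)) \<partial>lborel)"
      unfolding F_def using True by (intro nn_integral_cong) (auto simp: indicator_def)
    then show ?thesis using True by (simp add: nn_integral_exp_minus_tail)
  next
    case False
    then have "F y u = 0" for u unfolding F_def by auto
    then show ?thesis using False by simp
  qed
  have "(\<integral>\<^sup>+y. ennreal (if (\<forall>b\<in>Basis. 0 \<le> y \<bullet> b) then exp (- (\<Sum>b\<in>Basis. y \<bullet> b)\<^sup>2 / 2) else 0)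
          \<partial>(lborel :: 'a measure))
        = (\<integral>\<^sup>+u. (\<integral>\<^sup>+y. F y u \<partial>lborel) \<partial>lborel)"
    unfolding layer_cake using F_measurable by (rule lborel_pair.Fubini'[symmetric])
  also have "\<dots> = (\<integral>\<^sup>+u. ennreal (indicator {0..} u * u powr (real n / 2) / exp u) \<partial>lborel)
                  * ennreal (2 powr (real n / 2) / fact n)"
    unfolding F_def n_def nn_integral_orthant_level_set by (rule nn_integral_multc) measurable
  also have "(\<integral>\<^sup>+u. ennreal (indicator {0..} u * u powr (real n / 2) / exp u) \<partial>lborel)
             = ennreal (Gamma (real n / 2 + 1))"
    using Gamma_conv_nn_integral_real[of "real n / 2 + 1"] by simp
  finally show ?thesis
    unfolding orthant_const_def n_def by (simp add: ennreal_mult''[symmetric])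
qed

section \<open>Reduction of a general ridge to the model case\<close>

lemma nn_integral_lborel_diagonal_scaling:
  fixes f :: "'a::euclidean_space \<Rightarrow> ennreal" and c :: "'a \<Rightarrow> real"
  assumes c: "\<And>j. j \<in> Basis \<Longrightarrow> c j \<noteq> 0" and f: "f \<in> borel_measurable borel"
  shows "(\<integral>\<^sup>+x. f x \<partial>lborel)
       = ennreal (\<Prod>j\<in>Basis. \<bar>c j\<bar>) * (\<integral>\<^sup>+y. f (\<Sum>j\<in>Basis. (c j * (y \<bullet> j)) *\<^sub>R j) \<partial>lborel)"
proof -
  define D where "D = (\<lambda>y::'a. 0 + (\<Sum>j\<in>Basis. (c j * (y \<bullet> j)) *\<^sub>R j))"
  note [measurable] = f
  have [measurable]: "D \<in> borel \<rightarrow>\<^sub>M borel" unfolding D_def by measurable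
  have "lborel = density (distr lborel borel D) (\<lambda>_. (\<Prod>j\<in>Basis. \<bar>c j\<bar>))"
    unfolding D_def by (rule lborel_affine_euclidean) (use c in auto)
  then have "(\<integral>\<^sup>+x. f x \<partial>lborel)
             = (\<integral>\<^sup>+x. f x \<partial>density (distr lborel borel D) (\<lambda>_. (\<Prod>j\<in>Basis. \<bar>c j\<bar>)))"
    by (rule arg_cong)
  also have "\<dots> = (\<integral>\<^sup>+x. ennreal (\<Prod>j\<in>Basis. \<bar>c j\<bar>) * f x \<partial>distr lborel borel D)"
    using f by (subst nn_integral_density) auto
  also have "\<dots> = (\<integral>\<^sup>+y. ennreal (\<Prod>j\<in>Basis. \<bar>c j\<bar>) * f (D y) \<partial>lborel)"
    using f by (subst nn_integral_distr) auto
  also have "\<dots> = ennreal (\<Prod>j\<in>Basis. \<bar>c j\<bar>) * (\<integral>\<^sup>+y. f (D y) \<partial>lborel)"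
    using f by (intro nn_integral_cmult) measurable
  finally show ?thesis unfolding D_def by simp
qed

lemma nn_integral_orthant_ridge:
  fixes s a :: "'a::euclidean_space" and lam :: real
  assumes lam: "lam > 0" and sa: "\<forall>b\<in>Basis. (s \<bullet> b) * (a \<bullet> b) > 0"
  shows "(\<integral>\<^sup>+x. ennreal (if (\<forall>b\<in>Basis. 0 \<le> (s \<bullet> b) * (x \<bullet> b)) then exp (- (a \<bullet> x)\<^sup>2 / (2 * lam)) else 0)
            \<partial>lborel)
       = ennreal (sqrt lam ^ DIM('a) / (\<Prod>b\<in>Basis. \<bar>a \<bullet> b\<bar>) * orthant_const DIM('a))"
proof -
  define c where "c = (\<lambda>b. sqrt lam / (a \<bullet> b))"
  define f where "f = (\<lambda>x::'a. ennreal
      (if (\<forall>b\<in>Basis. 0 \<le> (s \<bullet> b) * (x \<bullet> b)) then exp (- (a \<bullet> x)\<^sup>2 / (2 * lam)) else 0))"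
  have a_nz: "a \<bullet> b \<noteq> 0" if "b \<in> Basis" for b using sa that by fastforce
  have sc_pos: "(s \<bullet> b) * c b > 0" if "b \<in> Basis" for b
  proof -
    have "(s \<bullet> b) * c b = sqrt lam * ((s \<bullet> b) * (a \<bullet> b)) / (a \<bullet> b)\<^sup>2"
      unfolding c_def using a_nz[OF that] by (simp add: field_simps power2_eq_square)
    then show ?thesis using sa that lam a_nz[OF that] by simp
  qed
  have substituted: "f (\<Sum>j\<in>Basis. (c j * (y \<bullet> j)) *\<^sub>R j)
      = ennreal (if (\<forall>b\<in>Basis. 0 \<le> y \<bullet> b) then exp (- (\<Sum>b\<in>Basis. y \<bullet> b)\<^sup>2 / 2) else 0)" for y
  proof -
    define x where "x = (\<Sum>j\<in>Basis. (c j * (y \<bullet> j)) *\<^sub>R j)"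
    have x_coord: "x \<bullet> b = c b * (y \<bullet> b)" if "b \<in> Basis" for b
      using that unfolding x_def by (simp add: inner_sum_left inner_Basis if_distrib cong: if_cong)
    have "0 \<le> (s \<bullet> b) * (x \<bullet> b) \<longleftrightarrow> 0 \<le> y \<bullet> b" if "b \<in> Basis" for b
      using sc_pos[OF that] zero_le_mult_iff[of "(s \<bullet> b) * c b" "y \<bullet> b"]
      by (simp add: x_coord[OF that] mult.assoc)
    moreover have "a \<bullet> x = sqrt lam * (\<Sum>b\<in>Basis. y \<bullet> b)"
      by (simp add: euclidean_inner[of a x] x_coord c_def a_nz sum_distrib_left)
    ultimately show ?thesis
      unfolding f_def x_def[symmetric] using lam by (simp add: power_mult_distrib cong: ball_cong)
  qed
  have "(\<integral>\<^sup>+x. f x \<partial>lborel)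
        = ennreal (\<Prod>j\<in>Basis. \<bar>c j\<bar>) * (\<integral>\<^sup>+y. f (\<Sum>j\<in>Basis. (c j * (y \<bullet> j)) *\<^sub>R j) \<partial>lborel)"
    by (rule nn_integral_lborel_diagonal_scaling) (use lam a_nz in \<open>auto simp: c_def f_def\<close>)
  also have "\<dots> = ennreal (\<Prod>j\<in>Basis. \<bar>c j\<bar>) * ennreal (orthant_const DIM('a))"
    by (simp only: substituted nn_integral_orthant_exp_sum_square)
  also have "(\<Prod>j\<in>Basis. \<bar>c j\<bar>) = sqrt lam ^ DIM('a) / (\<Prod>b\<in>Basis. \<bar>a \<bullet> b\<bar>)"
    unfolding c_def using lam by (simp add: prod_dividef abs_div)
  finally show ?thesis
    unfolding f_def using lam orthant_const_pos[of "DIM('a)"]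
    by (simp add: ennreal_mult[symmetric] prod_nonneg)
qed

section \<open>Domination of the Gaussian density by a ridge\<close>

lemma pos_def_eigenvalue_pos:
  fixes C :: "real^'n^'n"
  assumes pd: "pos_def_matrix C" and eig: "C *v v = lam *\<^sub>R v" and nv: "norm v = 1"
  shows "lam > 0"
proof -
  have "v \<noteq> 0" using nv by auto
  then have "v \<bullet> (C *v v) > 0" using pd unfolding pos_def_matrix_def by auto
  then show ?thesis using eig nv by (simp add: norm_eq_1)
qed

text \<open>For a unit eigenvector \<open>v\<close> of a positive-definite \<open>C\<close> with eigenvalue \<open>lam\<close>,
  \<open>(v \<bullet> x)\<^sup>2 \<le> lam * (x \<bullet> C\<inverse> x)\<close>: this is \<open>0 \<le> (x - t v) \<bullet> C\<inverse> (x - t v)\<close>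
  with \<open>t = x \<bullet> v\<close>, i.e. Cauchy-Schwarz for the inner product given by \<open>C\<inverse>\<close>.\<close>
lemma eigenvector_quadratic_bound:
  fixes C :: "real^'n^'n" and v x :: "real^'n" and lam :: real
  assumes pd: "pos_def_matrix C" and inv: "invertible C"
    and eig: "C *v v = lam *\<^sub>R v" and nv: "norm v = 1"
  shows "(v \<bullet> x)\<^sup>2 \<le> lam * (x \<bullet> (matrix_inv C *v x))"
proof -
  define B where "B = matrix_inv C"
  have CB: "C ** B = mat 1" and BC: "B ** C = mat 1"
    using someI_ex[OF inv[unfolded invertible_def]] unfolding B_def matrix_inv_def by auto
  have sym: "transpose C = C" and pos: "\<And>z. z \<noteq> 0 \<Longrightarrow> z \<bullet> (C *v z) > 0"
    using pd unfolding pos_def_matrix_def by auto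
  have vv: "v \<bullet> v = 1" using nv by (simp add: norm_eq_1)
  have lp: "lam > 0" by (rule pos_def_eigenvalue_pos[OF pd eig nv])
  have C_B: "C *v (B *v w) = w" for w by (simp add: matrix_vector_mul_assoc CB)
  have C_symmetric: "(C *v z) \<bullet> y = z \<bullet> (C *v y)" for z y
  proof -
    have "(C *v z) \<bullet> y = (z v* transpose C) \<bullet> y" by simp
    also have "\<dots> = z \<bullet> (transpose C *v y)" by (rule dot_lmul_matrix)
    finally show ?thesis using sym by simp
  qed
  have B_nonneg: "w \<bullet> (B *v w) \<ge> 0" for w
    using pos[of "B *v w"] C_B[of w] by (cases "B *v w = 0") (auto simp: inner_commute)
  have lam_Bv: "lam *\<^sub>R (B *v v) = v"
    using arg_cong[OF eig, of "(*v) B"] by (simp add: matrix_vector_mul_assoc BC matrix_vector_mult_scaleR)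
  have Bv: "B *v v = (1 / lam) *\<^sub>R v"
  proof -
    have "B *v v = (1 / lam) *\<^sub>R (lam *\<^sub>R (B *v v))" using lp by simp
    then show ?thesis by (simp only: lam_Bv)
  qed
  have vBx: "v \<bullet> (B *v x) = (x \<bullet> v) / lam"
  proof -
    have "x \<bullet> v = (C *v (B *v x)) \<bullet> v" by (simp add: C_B)
    also have "\<dots> = (B *v x) \<bullet> (lam *\<^sub>R v)" by (simp only: C_symmetric eig)
    also have "\<dots> = lam * (v \<bullet> (B *v x))" by (simp add: inner_commute)
    finally show ?thesis using lp by simp
  qed
  define t where "t = x \<bullet> v"
  have "0 \<le> (x - t *\<^sub>R v) \<bullet> (B *v (x - t *\<^sub>R v))" by (rule B_nonneg)
  also have "\<dots> = x \<bullet> (B *v x) - t * (x \<bullet> (B *v v)) - t * (v \<bullet> (B *v x)) + t * t * (v \<bullet> (B *v v))"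
    by (simp add: algebra_simps)
  also have "\<dots> = x \<bullet> (B *v x) - t\<^sup>2 / lam"
    unfolding vBx Bv t_def using vv lp by (simp add: field_simps power2_eq_square)
  finally show ?thesis
    using lp unfolding t_def B_def by (simp add: field_simps inner_commute)
qed

lemma gauss_density_le_ridge:
  fixes C :: "real^'n^'n" and v x :: "real^'n"
  assumes pd: "pos_def_matrix C" and det: "det C > 0"
    and eig: "C *v v = lam *\<^sub>R v" and nv: "norm v = 1"
  shows "gauss_density C x \<le> exp (- (v \<bullet> x)\<^sup>2 / (2 * lam)) / sqrt ((2 * pi) ^ CARD('n) * det C)"
proof -
  have inv: "invertible C" using det by (simp add: invertible_det_nz)
  have "- (x \<bullet> (matrix_inv C *v x)) / 2 \<le> - (v \<bullet> x)\<^sup>2 / (2 * lam)"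
    using pos_def_eigenvalue_pos[OF pd eig nv] eigenvector_quadratic_bound[OF pd inv eig nv, of x]
    by (simp add: field_simps)
  then show ?thesis
    unfolding gauss_density_def using det by (intro divide_right_mono) auto
qed

section \<open>The bound for a fixed Gaussian vector\<close>

lemma vec_ball_Basis:
  fixes P :: "real^'n \<Rightarrow> bool"
  shows "(\<forall>b\<in>Basis. P b) \<longleftrightarrow> (\<forall>j. P (axis j 1))"
  by (auto simp: Basis_vec_def)

lemma vec_prod_Basis:
  fixes f :: "real^'n \<Rightarrow> real"
  shows "(\<Prod>b\<in>Basis. f b) = (\<Prod>j\<in>UNIV. f (axis j 1))"
proof -
  have "Basis = (\<lambda>j. axis j (1::real)) ` (UNIV :: 'n set)" by (auto simp: Basis_vec_def)
  moreover have "inj (\<lambda>j. axis j (1::real) :: real^'n)" by (auto simp: inj_def axis_eq_axis)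
  ultimately show ?thesis using prod.reindex[of "\<lambda>j. axis j (1::real) :: real^'n" UNIV f] by simp
qed

lemma prod_nonzero_of_sign_pattern:
  fixes s w :: "real^'n"
  assumes "\<forall>j. s $ j * w $ j > 0"
  shows "(\<Prod>j\<in>UNIV. w $ j) \<noteq> 0"
proof -
  have "w $ j \<noteq> 0" for j using assms by (metis less_irrefl mult_zero_right)
  then show ?thesis by simp
qed

lemma gauss_orthant_probability_le:
  fixes s v :: "real^'n" and M :: "'a measure" and T :: "'a \<Rightarrow> real^'n" and C :: "real^'n^'n"
  assumes "prob_space M" and pd: "pos_def_matrix C" and det: "det C > 0"
    and gauss: "distributed M lborel T (\<lambda>x. ennreal (gauss_density C x))"
    and eig: "C *v v = lam *\<^sub>R v" and nv: "norm v = 1"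
    and sv: "\<forall>j. s $ j * v $ j > 0"
  shows "measure M {\<omega> \<in> space M. \<forall>j. s $ j * T \<omega> $ j \<ge> 0}
       \<le> sqrt lam ^ CARD('n) / \<bar>\<Prod>j\<in>UNIV. v $ j\<bar> * orthant_const CARD('n)
           / sqrt ((2 * pi) ^ CARD('n) * det C)"
proof -
  interpret prob_space M by fact
  define Orth where "Orth = {x::real^'n. \<forall>j. 0 \<le> s $ j * x $ j}"
  define c where "c = 1 / sqrt ((2 * pi) ^ CARD('n) * det C)"
  have c_pos: "c > 0" unfolding c_def using det by simp
  have lam_pos: "lam > 0" by (rule pos_def_eigenvalue_pos[OF pd eig nv])
  have in_Orth: "(\<forall>b\<in>Basis. 0 \<le> (s \<bullet> b) * (x \<bullet> b)) \<longleftrightarrow> x \<in> Orth" for x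
    unfolding vec_ball_Basis Orth_def by (simp add: inner_axis)
  have sv_Basis: "\<forall>b\<in>Basis. (s \<bullet> b) * (v \<bullet> b) > 0"
    unfolding vec_ball_Basis using sv by (simp add: inner_axis)
  have prod_v: "(\<Prod>b\<in>Basis. \<bar>v \<bullet> b\<bar>) = \<bar>\<Prod>j\<in>UNIV. v $ j\<bar>"
    unfolding vec_prod_Basis by (simp add: inner_axis abs_prod)
  have "ennreal (measure M {\<omega> \<in> space M. \<forall>j. s $ j * T \<omega> $ j \<ge> 0}) = emeasure M (T -` Orth \<inter> space M)"
    unfolding Orth_def by (simp add: emeasure_eq_measure Int_def conj_commute)
  also have "\<dots> = (\<integral>\<^sup>+x. ennreal (gauss_density C x) * indicator Orth x \<partial>lborel)"
    by (rule distributed_emeasure[OF gauss]) (simp add: Orth_def)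
  also have "\<dots> \<le> (\<integral>\<^sup>+x. ennreal (if (\<forall>b\<in>Basis. 0 \<le> (s \<bullet> b) * (x \<bullet> b))
                             then exp (- (v \<bullet> x)\<^sup>2 / (2 * lam)) else 0) * ennreal c \<partial>lborel)"
    using gauss_density_le_ridge[OF pd det eig nv] c_pos
    by (intro nn_integral_mono)
       (auto simp: in_Orth indicator_def c_def ennreal_mult[symmetric] intro!: ennreal_leI)
  also have "\<dots> = ennreal (sqrt lam ^ CARD('n) / \<bar>\<Prod>j\<in>UNIV. v $ j\<bar> * orthant_const CARD('n)) * ennreal c"
    by (subst nn_integral_multc) (auto simp: nn_integral_orthant_ridge[OF lam_pos sv_Basis] prod_v)
  also have "\<dots> = ennreal (sqrt lam ^ CARD('n) / \<bar>\<Prod>j\<in>UNIV. v $ j\<bar> * orthant_const CARD('n) * c)"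
    using lam_pos c_pos orthant_const_pos[of "CARD('n)"] by (subst ennreal_mult[symmetric]) auto
  finally show ?thesis
    unfolding c_def using lam_pos orthant_const_pos[of "CARD('n)"] det
    by (subst (asm) ennreal_le_iff) auto
qed

lemma orthant_const_normalized:
  assumes "n \<ge> 1"
  shows "orthant_const n / sqrt ((2 * pi) ^ n)
       = Gamma (real n / 2) / (2 * pi powr (real n / 2) * fact (n - 1))"
proof -
  have sqrt_eq: "sqrt ((2 * pi) ^ n) = 2 powr (real n / 2) * pi powr (real n / 2)"
    by (simp add: sqrt_def root_powr_inverse powr_realpow[symmetric] powr_powr powr_mult)
  have Gamma_eq: "Gamma (real n / 2 + 1) = (real n / 2) * Gamma (real n / 2)"
    by (rule Gamma_plus1) (use nonpos_Ints_nonpos[of "real n / 2"] assms in fastforce)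
  have fact_eq: "(fact n :: real) = real n * fact (n - 1)"
    using assms by (cases n) auto
  show ?thesis
    unfolding orthant_const_def sqrt_eq Gamma_eq fact_eq using assms by (simp add: field_simps)
qed

lemma gauss_orthant_probability_scaled_le:
  fixes s v :: "real^'n" and M :: "'a measure" and T :: "'a \<Rightarrow> real^'n" and C :: "real^'n^'n"
  assumes P: "prob_space M" and pd: "pos_def_matrix C"
    and gauss: "distributed M lborel T (\<lambda>x. ennreal (gauss_density C x))"
    and eig: "C *v v = lam *\<^sub>R v" and nv: "norm v = 1"
    and sv: "\<forall>j. s $ j * v $ j > 0"
  shows "measure M {\<omega> \<in> space M. \<forall>j. s $ j * T \<omega> $ j \<ge> 0} * sqrt (det C / lam ^ CARD('n))
     \<le> Gamma (real CARD('n) / 2) / (2 * pi powr (real CARD('n) / 2) * fact (CARD('n) - 1))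
         * inverse \<bar>\<Prod>j\<in>UNIV. v $ j\<bar>"
    (is "?Pr * _ \<le> ?K * inverse ?Pv")
proof -
  define n where "n = CARD('n)"
  have Pv_pos: "?Pv > 0" using prod_nonzero_of_sign_pattern[OF sv] by simp
  have K_pos: "?K > 0" by simp
  have lam_pos: "lam > 0" by (rule pos_def_eigenvalue_pos[OF pd eig nv])
  show ?thesis
  proof (cases "det C > 0")
    case False
    then have "sqrt (det C / lam ^ CARD('n)) \<le> 0" using lam_pos by (simp add: divide_nonpos_pos)
    then have "?Pr * sqrt (det C / lam ^ CARD('n)) \<le> 0" by (simp add: mult_nonneg_nonpos)
    also have "0 \<le> ?K * inverse ?Pv" using K_pos Pv_pos by (simp add: less_imp_le)
    finally show ?thesis .
  next
    case True
    have "?Pr * sqrt (det C / lam ^ n)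
          \<le> sqrt lam ^ n / ?Pv * orthant_const n / sqrt ((2 * pi) ^ n * det C) * sqrt (det C / lam ^ n)"
      using gauss_orthant_probability_le[OF P pd True gauss eig nv sv] unfolding n_def
      by (rule mult_right_mono) (use True lam_pos in \<open>simp add: less_imp_le\<close>)
    also have "\<dots> = orthant_const n / sqrt ((2 * pi) ^ n) * inverse ?Pv"
      using True lam_pos Pv_pos
      by (simp add: real_sqrt_mult real_sqrt_divide real_sqrt_power field_simps)
    also have "orthant_const n / sqrt ((2 * pi) ^ n) = ?K"
      unfolding n_def by (rule orthant_const_normalized) (simp add: Suc_leI)
    finally show ?thesis unfolding n_def .
  qed
qed

section \<open>Passing to the limit\<close>

lemma eventually_sign_pattern:
  fixes v :: "'b \<Rightarrow> real^'n" and w s :: "real^'n"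
  assumes "(v \<longlongrightarrow> w) F" and "\<forall>j. s $ j * w $ j > 0"
  shows "eventually (\<lambda>x. \<forall>j. s $ j * v x $ j > 0) F"
proof -
  have "eventually (\<lambda>x. s $ j * v x $ j > 0) F" for j
    using order_tendstoD(1)[OF tendsto_mult_left[OF tendsto_vec_nth[OF assms(1)]]] assms(2) by blast
  then show ?thesis by (rule eventually_all_finite)
qed

lemma Limsup_le_limit_of_eventually_le:
  fixes f g :: "'b \<Rightarrow> ereal"
  assumes "F \<noteq> bot" and "eventually (\<lambda>x. f x \<le> g x) F" and "(g \<longlongrightarrow> l) F"
  shows "Limsup F f \<le> l"
  using Limsup_mono[OF assms(2)] lim_imp_Limsup[OF assms(1,3)] by simp

theorem proposition4p2:
  fixes s :: "real^'n"
    and M :: "real \<Rightarrow> 'a measure"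
    and T :: "real \<Rightarrow> 'a \<Rightarrow> real^'n"
    and C :: "real \<Rightarrow> real^'n^'n"
    and lam1 :: "real \<Rightarrow> real"
    and v1 :: "real \<Rightarrow> real^'n"
    and vbar :: "real^'n"
  assumes s_sign: "\<forall>j. s $ j = 1 \<or> s $ j = -1"
    and prob: "\<forall>\<delta>>0. prob_space (M \<delta>)"
    and posdef: "\<forall>\<delta>>0. pos_def_matrix (C \<delta>)"
    and gauss: "\<forall>\<delta>>0. distributed (M \<delta>) lborel (T \<delta>) (\<lambda>x. ennreal (gauss_density (C \<delta>) x))"
    and eig: "\<forall>\<delta>>0. C \<delta> *v v1 \<delta> = lam1 \<delta> *\<^sub>R v1 \<delta> \<and> norm (v1 \<delta>) = 1"
    and lim: "(v1 \<longlongrightarrow> vbar) (at_right 0)"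
    and vbar_sign: "\<forall>j. s $ j * vbar $ j > 0"
  shows "Limsup (at_right 0)
           (\<lambda>\<delta>. ereal (measure (M \<delta>) {\<omega> \<in> space (M \<delta>). \<forall>j. s $ j * T \<delta> \<omega> $ j \<ge> 0}
                    * sqrt (det (C \<delta>) / lam1 \<delta> ^ CARD('n))))
         \<le> ereal (Gamma (real CARD('n) / 2) / (2 * pi powr (real CARD('n) / 2) * fact (CARD('n) - 1))
                  * inverse \<bar>\<Prod>j\<in>UNIV. vbar $ j\<bar>)"
proof (rule Limsup_le_limit_of_eventually_le)
  define K where "K = Gamma (real CARD('n) / 2) / (2 * pi powr (real CARD('n) / 2) * fact (CARD('n) - 1))"
  have "eventually (\<lambda>\<delta>::real. \<delta> > 0) (at_right 0)" by (simp add: eventually_at_right_less)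
  with eventually_sign_pattern[OF lim vbar_sign]
  show "eventually (\<lambda>\<delta>. ereal (measure (M \<delta>) {\<omega> \<in> space (M \<delta>). \<forall>j. s $ j * T \<delta> \<omega> $ j \<ge> 0}
                             * sqrt (det (C \<delta>) / lam1 \<delta> ^ CARD('n)))
                        \<le> ereal (K * inverse \<bar>\<Prod>j\<in>UNIV. v1 \<delta> $ j\<bar>)) (at_right 0)"
  proof eventually_elim
    case (elim \<delta>)
    then show ?case
      unfolding K_def ereal_less_eq using prob posdef gauss eig
      by (intro gauss_orthant_probability_scaled_le) auto
  qed
  have "\<bar>\<Prod>j\<in>UNIV. vbar $ j\<bar> \<noteq> 0"
    using prod_nonzero_of_sign_pattern[OF vbar_sign] by simp
  then show "((\<lambda>\<delta>. ereal (K * inverse \<bar>\<Prod>j\<in>UNIV. v1 \<delta> $ j\<bar>)) \<longlongrightarrow>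
               ereal (K * inverse \<bar>\<Prod>j\<in>UNIV. vbar $ j\<bar>)) (at_right 0)"
    unfolding lim_ereal by (intro tendsto_intros lim)
qed simp

end
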